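(* Let $\mathcal{D}$ be a set of discounting functions. For every $\mathrm{LTL}^{\mathrm{disc}}[\mathcal{D}]$ formula $\varphi$ over $AP$ and every threshold $v\in[0,1]$, there exists an alternating weak automaton $\mathcal{A}_{\varphi,v}$ over the alphabet $2^{AP}$ such that for every computation $\pi$: (1) if $[\![\pi,\varphi]\!]>v$, then $\mathcal{A}_{\varphi,v}$ accepts $\pi$; (2) if $\mathcal{A}_{\varphi,v}$ accepts $\pi$ and $\pi$ is a lasso computation, then $[\![\pi,\varphi]\!]>v$.
   Context: Let $AP$ be a finite set of atomic propositions. A computation is an infinite word $\pi=\pi_0\pi_1\cdots\in(2^{AP})^\omega$, $\pi^i=\pi_i\pi_{i+1}\cdots$; a lasso computation is one of the form $u\cdot w^\omega$ with $u,w\in(2^{AP})^*$, $w\neq\epsilon$. A discounting function is a strictly decreasing $\eta:\mathbb{N}\to[0,1]$ with $\lim_{i\to\infty}\eta(i)=0$. $\mathrm{LTL}^{\mathrm{disc}}[\mathcal{D}]$ formulas: $\varphi ::= \mathtt{True}\mid p\mid\neg\varphi\mid\varphi\vee\varphi\mid\mathsf{X}\varphi\mid\varphi\,\mathsf{U}\,\varphi\mid\varphi\,\mathsf{U}_\eta\,\varphi$ ($p\in AP$, $\eta\in\mathcal{D}$), with values: $[\![\pi,\mathtt{True}]\!]=1$; $[\![\pi,p]\!]=1$ if $p\in\pi_0$, else $0$; $[\![\pi,\neg\varphi]\!]=1-[\![\pi,\varphi]\!]$; $[\![\pi,\varphi\vee\psi]\!]=\max\{[\![\pi,\varphi]\!],[\![\pi,\psi]\!]\}$;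 $[\![\pi,\mathsf{X}\varphi]\!]=[\![\pi^1,\varphi]\!]$; $[\![\pi,\varphi\,\mathsf{U}\,\psi]\!]=\sup_{i\ge0}\min\{[\![\pi^i,\psi]\!],\min_{0\le j<i}[\![\pi^j,\varphi]\!]\}$; $[\![\pi,\varphi\,\mathsf{U}_\eta\,\psi]\!]=\sup_{i\ge0}\min\{\eta(i)[\![\pi^i,\psi]\!],\min_{0\le j<i}\eta(j)[\![\pi^j,\varphi]\!]\}$. An alternating B\"uchi automaton is $\mathcal{A}=\langle\Sigma,Q,q_{in},\delta,\alpha\rangle$ with finite alphabet $\Sigma$, finite state set $Q$, initial state $q_{in}$, transition function $\delta:Q\times\Sigma\to\mathcal{B}^+(Q)$ (positive Boolean formulas over $Q$, including $\mathtt{True},\mathtt{False}$) and accepting set $\alpha\subseteq Q$. A run on $w=\sigma_0\sigma_1\cdots$ is a DAG with nodes in $Q\times\mathbb{N}$, level $0$ being $\{q_{in}\}$, such that for each node $\langle q,l\rangle$ the set of its successors at level $l+1$ satisfies $\delta(q,\sigma_l)$; it is accepting if every infinite path visits $\alpha$ infinitely often, and $w$ is accepted if some run is accepting. The automaton is weak if $Q$ can be partitioned into sets $Q_1,\dots,Q_k$, each contained in or disjoint from $\alpha$, with a partial order on them such that transitions from a state in $Q_i$ only lead to states in sets $Q_j\le Q_i$. *)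

theory Defs
  imports Complex_Main "HOL-Library.Disjoint_Sets"
begin

definition discounting :: "(nat \<Rightarrow> real) \<Rightarrow> bool" where
  "discounting \<eta> \<longleftrightarrow>
     (\<forall>i. 0 \<le> \<eta> i \<and> \<eta> i \<le> 1) \<and>
     (\<forall>i j. i < j \<longrightarrow> \<eta> j < \<eta> i) \<and>
     \<eta> \<longlonglongrightarrow> 0"

datatype 'ap ltld =
    LTrue
  | Prop 'ap
  | Neg "'ap ltld"
  | Or "'ap ltld" "'ap ltld"
  | Next "'ap ltld"
  | Until "'ap ltld" "'ap ltld"
  | DUntil "'ap ltld" "nat \<Rightarrow> real" "'ap ltld"

fun discs :: "'ap ltld \<Rightarrow> (nat \<Rightarrow> real) set" where
  "discs LTrue = {}"
| "discs (Prop p) = {}"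
| "discs (Neg f) = discs f"
| "discs (Or f g) = discs f \<union> discs g"
| "discs (Next f) = discs f"
| "discs (Until f g) = discs f \<union> discs g"
| "discs (DUntil f \<eta> g) = insert \<eta> (discs f \<union> discs g)"

definition ltld_over :: "(nat \<Rightarrow> real) set \<Rightarrow> 'ap ltld \<Rightarrow> bool" where
  "ltld_over D f \<longleftrightarrow> discs f \<subseteq> D"

type_synonym 'ap comp = "nat \<Rightarrow> 'ap set"

definition suffix_comp :: "nat \<Rightarrow> 'ap comp \<Rightarrow> 'ap comp" where
  "suffix_comp i \<pi> = (\<lambda>k. \<pi> (i + k))"

text \<open>Minimum over j < i of f j, with the empty minimum equal to 1
  (all values lie in [0,1], so inserting 1 is harmless).\<close>
definition min_pre :: "(nat \<Rightarrow> real) \<Rightarrow> nat \<Rightarrow> real" where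
  "min_pre f i = Min (insert 1 (f ` {..<i}))"

fun val :: "'ap comp \<Rightarrow> 'ap ltld \<Rightarrow> real" where
  "val \<pi> LTrue = 1"
| "val \<pi> (Prop p) = (if p \<in> \<pi> 0 then 1 else 0)"
| "val \<pi> (Neg f) = 1 - val \<pi> f"
| "val \<pi> (Or f g) = max (val \<pi> f) (val \<pi> g)"
| "val \<pi> (Next f) = val (suffix_comp 1 \<pi>) f"
| "val \<pi> (Until f g) =
     (SUP i. min (val (suffix_comp i \<pi>) g) (min_pre (\<lambda>j. val (suffix_comp j \<pi>) f) i))"
| "val \<pi> (DUntil f \<eta> g) =
     (SUP i. min (\<eta> i * val (suffix_comp i \<pi>) g)
                 (min_pre (\<lambda>j. \<eta> j * val (suffix_comp j \<pi>) f) i))"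

definition lasso :: "'ap comp \<Rightarrow> bool" where
  "lasso \<pi> \<longleftrightarrow> (\<exists>u w. w \<noteq> [] \<and>
     \<pi> = (\<lambda>i. if i < length u then u ! i else w ! ((i - length u) mod length w)))"

datatype 'q pbf = PTrue | PFalse | PVar 'q | PAnd "'q pbf" "'q pbf" | POr "'q pbf" "'q pbf"

fun pbf_sat :: "'q set \<Rightarrow> 'q pbf \<Rightarrow> bool" where
  "pbf_sat S PTrue = True"
| "pbf_sat S PFalse = False"
| "pbf_sat S (PVar q) = (q \<in> S)"
| "pbf_sat S (PAnd a b) = (pbf_sat S a \<and> pbf_sat S b)"
| "pbf_sat S (POr a b) = (pbf_sat S a \<or> pbf_sat S b)"

fun pbf_atoms :: "'q pbf \<Rightarrow> 'q set" where
  "pbf_atoms PTrue = {}"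
| "pbf_atoms PFalse = {}"
| "pbf_atoms (PVar q) = {q}"
| "pbf_atoms (PAnd a b) = pbf_atoms a \<union> pbf_atoms b"
| "pbf_atoms (POr a b) = pbf_atoms a \<union> pbf_atoms b"

text \<open>Alternating Buchi automaton over alphabet 's (the whole type), with
  states drawn from nat (any finite state set can be renamed into nat).\<close>
record 's aba =
  states :: "nat set"
  init :: nat
  trans :: "nat \<Rightarrow> 's \<Rightarrow> nat pbf"
  acc :: "nat set"

definition wf_aba :: "'s aba \<Rightarrow> bool" where
  "wf_aba A \<longleftrightarrow> finite (states A) \<and> init A \<in> states A \<and> acc A \<subseteq> states A \<and>
     (\<forall>q\<in>states A. \<forall>\<sigma>. pbf_atoms (trans A q \<sigma>) \<subseteq> states A)"

text \<open>A run DAG on word w: R l is the set of states at level l, E l q is the set of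
  successors (at level l+1) of node (q,l).\<close>
definition is_run :: "'s aba \<Rightarrow> (nat \<Rightarrow> 's) \<Rightarrow> (nat \<Rightarrow> nat set) \<Rightarrow> (nat \<Rightarrow> nat \<Rightarrow> nat set) \<Rightarrow> bool" where
  "is_run A w R E \<longleftrightarrow>
     R 0 = {init A} \<and>
     (\<forall>l. R l \<subseteq> states A) \<and>
     (\<forall>l. R (Suc l) = (\<Union>q\<in>R l. E l q)) \<and>
     (\<forall>l. \<forall>q\<in>R l. pbf_sat (E l q) (trans A q (w l)))"

definition run_path :: "'s aba \<Rightarrow> (nat \<Rightarrow> nat \<Rightarrow> nat set) \<Rightarrow> (nat \<Rightarrow> nat) \<Rightarrow> bool" where
  "run_path A E p \<longleftrightarrow> p 0 = init A \<and> (\<forall>i. p (Suc i) \<in> E i (p i))"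

definition accepting_run :: "'s aba \<Rightarrow> (nat \<Rightarrow> nat \<Rightarrow> nat set) \<Rightarrow> bool" where
  "accepting_run A E \<longleftrightarrow> (\<forall>p. run_path A E p \<longrightarrow> (\<exists>\<^sub>\<infinity>i. p i \<in> acc A))"

definition accepts :: "'s aba \<Rightarrow> (nat \<Rightarrow> 's) \<Rightarrow> bool" where
  "accepts A w \<longleftrightarrow> (\<exists>R E. is_run A w R E \<and> accepting_run A E)"

definition weak_aba :: "'s aba \<Rightarrow> bool" where
  "weak_aba A \<longleftrightarrow> (\<exists>P r.
     partition_on (states A) P \<and> finite P \<and>
     partial_order_on P r \<and>
     (\<forall>B\<in>P. B \<subseteq> acc A \<or> B \<inter> acc A = {}) \<and>
     (\<forall>B\<in>P. \<forall>B'\<in>P. \<forall>q\<in>B. \<forall>q'\<in>B'. \<forall>\<sigma>.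
         q' \<in> pbf_atoms (trans A q \<sigma>) \<longrightarrow> (B', B) \<in> r))"

end

theory Submission
  imports Defs "HOL-Library.Infinite_Set" "HOL-Library.Product_Lexorder"
begin

text \<open>The states of the automaton are triples (\<psi>, Gt, t) and (\<psi>, Lt, t), asserting that the value of
  \<psi> is above, resp. below, the threshold t. Their transitions follow the expansion law
  val \<pi> (DUntil f \<eta> g) = max (\<eta> 0 * val \<pi> g) (min (\<eta> 0 * val \<pi> f) (val \<pi>' (DUntil f \<eta>' g)))
  with \<pi>' = suffix_comp 1 \<pi> and \<eta>' i = \<eta> (i + 1), rescaling thresholds by \<eta> 0. Since \<eta> tends to 0, a discounted until with positive threshold t
  is unfolded only until \<eta> drops below t; with threshold 0 it may be replaced by an undiscounted
  until. Hence finitely many states are reachable, and every transition except the self-loop of an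
  until strictly decreases a well-founded rank, so the automaton is weak. Until states of mode Lt
  are accepting, those of mode Gt are not, since their witness must eventually be reached.

  If val \<pi> \<phi> > v, the run that follows the true states is accepting: along the self-loop of a true
  Gt-until the position of its first witness decreases. Conversely every run from a false state
  contains a path through false states; on a lasso computation every value of an until is attained,
  so along the self-loop of a false Lt-until the position of its first counterwitness decreases,
  and the path cannot stay in an accepting state forever.\<close>

section \<open>The until operator on sequences\<close>

lemma min_pre_0 [simp]: "min_pre b 0 = 1"
  by (simp add: min_pre_def)

lemma min_pre_le_1: "min_pre b i \<le> 1"
  unfolding min_pre_def by (rule Min_le) auto

lemma less_min_pre_iff: "t < min_pre b i \<longleftrightarrow> t < 1 \<and> (\<forall>j<i. t < b j)"
  unfolding min_pre_def by (subst Min_gr_iff) auto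

lemma min_pre_Suc: "min_pre b (Suc i) = min (b 0) (min_pre (b \<circ> Suc) i)"
proof -
  have "insert 1 (b ` {..<Suc i}) = insert (b 0) (insert 1 ((b \<circ> Suc) ` {..<i}))"
    by (auto simp: lessThan_Suc_eq_insert_0)
  thus ?thesis unfolding min_pre_def by (simp add: Min_insert)
qed

lemma min_pre_in: "min_pre b i \<in> insert 1 (range b)"
proof -
  have "Min (insert 1 (b ` {..<i})) \<in> insert 1 (b ` {..<i})" by (rule Min_in) auto
  thus ?thesis unfolding min_pre_def by auto
qed

definition unit_valued :: "(nat \<Rightarrow> real) \<Rightarrow> bool" where
  "unit_valued a \<longleftrightarrow> (\<forall>i. 0 \<le> a i \<and> a i \<le> 1)"

lemma unit_valued_Suc: "unit_valued a \<Longrightarrow> unit_valued (a \<circ> Suc)"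
  by (simp add: unit_valued_def)

definition until_term :: "(nat \<Rightarrow> real) \<Rightarrow> (nat \<Rightarrow> real) \<Rightarrow> nat \<Rightarrow> real" where
  "until_term a b i = min (a i) (min_pre b i)"

definition until_sup :: "(nat \<Rightarrow> real) \<Rightarrow> (nat \<Rightarrow> real) \<Rightarrow> real" where
  "until_sup a b = (SUP i. until_term a b i)"

lemma until_term_0: "until_term a b 0 = min (a 0) 1"
  by (simp add: until_term_def)

lemma until_term_Suc: "until_term a b (Suc i) = min (b 0) (until_term (a \<circ> Suc) (b \<circ> Suc) i)"
  by (simp add: until_term_def min_pre_Suc min.left_commute)

lemma until_term_le: "until_term a b i \<le> a i"
  by (simp add: until_term_def)

lemma less_until_term_iff: "t < until_term a b i \<longleftrightarrow> t < a i \<and> t < 1 \<and> (\<forall>j<i. t < b j)"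
  by (simp add: until_term_def less_min_pre_iff)

lemma until_term_unit:
  assumes "unit_valued a" "unit_valued b"
  shows "0 \<le> until_term a b i \<and> until_term a b i \<le> 1"
proof -
  have "0 \<le> min_pre b i"
    using assms(2) unfolding min_pre_def unit_valued_def by (subst Min_ge_iff) auto
  thus ?thesis using assms(1) min_pre_le_1[of b i] by (auto simp: until_term_def unit_valued_def)
qed

lemma bdd_above_until_term: "unit_valued a \<Longrightarrow> unit_valued b \<Longrightarrow> bdd_above (range (until_term a b))"
  using until_term_unit by (intro bdd_aboveI[of _ 1]) auto

lemma until_term_le_sup: "unit_valued a \<Longrightarrow> unit_valued b \<Longrightarrow> until_term a b i \<le> until_sup a b"
  unfolding until_sup_def by (intro cSUP_upper bdd_above_until_term) auto

lemma until_sup_le: "(\<And>i. until_term a b i \<le> s) \<Longrightarrow> until_sup a b \<le> s"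
  unfolding until_sup_def by (rule cSUP_least) auto

lemma until_sup_unit:
  assumes "unit_valued a" "unit_valued b"
  shows "0 \<le> until_sup a b \<and> until_sup a b \<le> 1"
proof
  show "0 \<le> until_sup a b"
    using until_term_unit[OF assms, of 0] until_term_le_sup[OF assms, of 0] by linarith
  show "until_sup a b \<le> 1"
    using until_term_unit[OF assms] by (intro until_sup_le) blast
qed

lemma less_until_sup_iff:
  "unit_valued a \<Longrightarrow> unit_valued b \<Longrightarrow> t < until_sup a b \<longleftrightarrow> (\<exists>i. t < until_term a b i)"
  unfolding until_sup_def by (subst less_cSUP_iff) (auto intro: bdd_above_until_term)

lemma until_sup_unfold:
  assumes "unit_valued a" "unit_valued b"
  shows "until_sup a b = max (a 0) (min (b 0) (until_sup (a \<circ> Suc) (b \<circ> Suc)))"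
proof (rule antisym)
  have "until_term a b i \<le> max (a 0) (min (b 0) (until_sup (a \<circ> Suc) (b \<circ> Suc)))" for i
  proof (cases i)
    case (Suc k)
    have "until_term (a \<circ> Suc) (b \<circ> Suc) k \<le> until_sup (a \<circ> Suc) (b \<circ> Suc)"
      using assms by (intro until_term_le_sup unit_valued_Suc)
    thus ?thesis unfolding Suc until_term_Suc by linarith
  qed (simp add: until_term_0)
  thus "until_sup a b \<le> max (a 0) (min (b 0) (until_sup (a \<circ> Suc) (b \<circ> Suc)))"
    by (rule until_sup_le)
next
  have "a 0 \<le> until_sup a b"
    using until_term_le_sup[OF assms, of 0] assms(1) by (simp add: until_term_0 unit_valued_def)
  moreover have "min (b 0) (until_sup (a \<circ> Suc) (b \<circ> Suc)) \<le> until_sup a b"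
  proof (rule dense_le)
    fix s assume "s < min (b 0) (until_sup (a \<circ> Suc) (b \<circ> Suc))"
    then obtain k where "s < b 0" "s < until_term (a \<circ> Suc) (b \<circ> Suc) k"
      using assms by (auto simp: less_until_sup_iff unit_valued_Suc)
    hence "s < until_term a b (Suc k)" by (simp add: until_term_Suc)
    with until_term_le_sup[OF assms] show "s \<le> until_sup a b"
      by (meson less_imp_le order_trans)
  qed
  ultimately show "max (a 0) (min (b 0) (until_sup (a \<circ> Suc) (b \<circ> Suc))) \<le> until_sup a b"
    by simp
qed

lemma Least_less_Least:
  fixes P Q :: "nat \<Rightarrow> bool"
  assumes "P n" "\<not> P 0" "\<And>i. P (Suc i) \<Longrightarrow> Q i"
  shows "(LEAST i. Q i) < (LEAST i. P i)"
proof -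
  obtain m where "P (Suc m)" using assms(1,2) by (cases n) auto
  hence "Q (LEAST i. P (Suc i))" by (intro assms(3) LeastI)
  hence "(LEAST i. Q i) \<le> (LEAST i. P (Suc i))" by (rule Least_le)
  also have "\<dots> < (LEAST i. P i)" using Least_Suc[of P, OF assms(1,2)] by simp
  finally show ?thesis .
qed

lemma until_witness_decreases:
  assumes "unit_valued a" "unit_valued b" "t < until_sup a b" "\<not> t < a 0"
  shows "(LEAST i. t < until_term (a \<circ> Suc) (b \<circ> Suc) i) < (LEAST i. t < until_term a b i)"
proof -
  obtain n where "t < until_term a b n" using assms(1-3) by (auto simp: less_until_sup_iff)
  moreover have "\<not> t < until_term a b 0" using assms(4) by (simp add: until_term_0)
  ultimately show ?thesis by (rule Least_less_Least) (simp add: until_term_Suc)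
qed

lemma until_counterwitness_decreases:
  assumes "finite (range (until_term a b))" "\<not> until_sup a b < t" "a 0 < t"
  shows "(LEAST i. \<not> until_term (a \<circ> Suc) (b \<circ> Suc) i < t) < (LEAST i. \<not> until_term a b i < t)"
proof -
  have "until_sup a b \<in> range (until_term a b)"
    unfolding until_sup_def using assms(1) by (simp add: cSup_eq_Max)
  then obtain n where "\<not> until_term a b n < t" using assms(2) by auto
  moreover have "\<not> \<not> until_term a b 0 < t" using assms(3) by (simp add: until_term_0)
  ultimately show ?thesis by (rule Least_less_Least) (simp add: until_term_Suc)
qed

lemma finite_range_until_term:
  assumes "finite (range a)" "finite (range b)"
  shows "finite (range (until_term a b))"
proof -
  have "range (min_pre b) \<subseteq> insert 1 (range b)" using min_pre_in by auto
  hence "finite (range (min_pre b))" using assms(2) by (simp add: finite_subset)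
  moreover have "range (until_term a b) \<subseteq> (\<lambda>(x, y). min x y) ` (range a \<times> range (min_pre b))"
    by (auto simp: until_term_def)
  ultimately show ?thesis using assms(1) by (meson finite_SigmaI finite_imageI finite_subset)
qed

definition shift_by :: "nat \<Rightarrow> (nat \<Rightarrow> real) \<Rightarrow> nat \<Rightarrow> real" where
  "shift_by k \<eta> = (\<lambda>i. \<eta> (i + k))"

lemma shift_by_apply [simp]: "shift_by k \<eta> i = \<eta> (i + k)"
  by (simp add: shift_by_def)

lemma discounting_pos: "discounting \<eta> \<Longrightarrow> 0 < \<eta> i"
  unfolding discounting_def by (meson lessI order_le_less_trans)

lemma discounting_antimono: "discounting \<eta> \<Longrightarrow> i \<le> j \<Longrightarrow> \<eta> j \<le> \<eta> i"
  unfolding discounting_def by (metis le_less order.refl)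

lemma discounting_eventually_less: "discounting \<eta> \<Longrightarrow> 0 < t \<Longrightarrow> \<exists>k. \<eta> k < t"
  unfolding discounting_def by (metis order_tendstoD(2) eventually_sequentially order.refl)

lemma discounting_shift_by: "discounting \<eta> \<Longrightarrow> discounting (shift_by k \<eta>)"
  unfolding discounting_def shift_by_def by (auto intro: LIMSEQ_ignore_initial_segment)

definition disc_horizon :: "(nat \<Rightarrow> real) \<Rightarrow> real \<Rightarrow> nat" where
  "disc_horizon \<eta> t = (LEAST k. \<eta> k < t)"

lemma disc_horizon_shift:
  assumes "discounting \<eta>" "0 < t" "\<not> \<eta> 0 < t"
  shows "disc_horizon \<eta> t = Suc (disc_horizon (shift_by 1 \<eta>) t)"
proof -
  obtain k where "\<eta> k < t" using discounting_eventually_less[OF assms(1,2)] by blast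
  thus ?thesis unfolding disc_horizon_def using Least_Suc[of "\<lambda>k. \<eta> k < t"] assms(3) by simp
qed

lemma suffix_comp_apply_0 [simp]: "suffix_comp i \<pi> 0 = \<pi> i"
  by (simp add: suffix_comp_def)

lemma suffix_comp_0 [simp]: "suffix_comp 0 \<pi> = \<pi>"
  by (simp add: suffix_comp_def)

lemma suffix_comp_suffix_comp [simp]: "suffix_comp i (suffix_comp j \<pi>) = suffix_comp (j + i) \<pi>"
  by (simp add: suffix_comp_def add.assoc)

definition well_discounted :: "'ap ltld \<Rightarrow> bool" where
  "well_discounted \<psi> \<longleftrightarrow> (\<forall>\<eta>\<in>discs \<psi>. discounting \<eta>)"

lemma well_discounted_simps [simp]:
  "well_discounted LTrue" "well_discounted (Prop p)"
  "well_discounted (Neg f) \<longleftrightarrow> well_discounted f"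
  "well_discounted (Or f g) \<longleftrightarrow> well_discounted f \<and> well_discounted g"
  "well_discounted (Next f) \<longleftrightarrow> well_discounted f"
  "well_discounted (Until f g) \<longleftrightarrow> well_discounted f \<and> well_discounted g"
  "well_discounted (DUntil f \<eta> g) \<longleftrightarrow> discounting \<eta> \<and> well_discounted f \<and> well_discounted g"
  by (auto simp: well_discounted_def)

definition vals :: "'ap comp \<Rightarrow> 'ap ltld \<Rightarrow> nat \<Rightarrow> real" where
  "vals \<pi> \<psi> = (\<lambda>i. val (suffix_comp i \<pi>) \<psi>)"

definition disc_vals :: "(nat \<Rightarrow> real) \<Rightarrow> 'ap comp \<Rightarrow> 'ap ltld \<Rightarrow> nat \<Rightarrow> real" where
  "disc_vals \<eta> \<pi> \<psi> = (\<lambda>i. \<eta> i * val (suffix_comp i \<pi>) \<psi>)"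

lemma vals_0 [simp]: "vals \<pi> \<psi> 0 = val \<pi> \<psi>"
  by (simp add: vals_def)

lemma disc_vals_0 [simp]: "disc_vals \<eta> \<pi> \<psi> 0 = \<eta> 0 * val \<pi> \<psi>"
  by (simp add: disc_vals_def)

lemma vals_Suc [simp]: "vals \<pi> \<psi> \<circ> Suc = vals (suffix_comp 1 \<pi>) \<psi>"
  by (simp add: vals_def fun_eq_iff)

lemma disc_vals_Suc [simp]: "disc_vals \<eta> \<pi> \<psi> \<circ> Suc = disc_vals (shift_by 1 \<eta>) (suffix_comp 1 \<pi>) \<psi>"
  by (simp add: disc_vals_def fun_eq_iff)

lemma val_Until: "val \<pi> (Until f g) = until_sup (vals \<pi> g) (vals \<pi> f)"
  by (simp add: until_sup_def until_term_def vals_def)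

lemma val_DUntil: "val \<pi> (DUntil f \<eta> g) = until_sup (disc_vals \<eta> \<pi> g) (disc_vals \<eta> \<pi> f)"
  by (simp add: until_sup_def until_term_def disc_vals_def)

declare val.simps(6,7) [simp del]

lemma unit_valued_disc_vals:
  "discounting \<eta> \<Longrightarrow> unit_valued (vals \<pi> \<psi>) \<Longrightarrow> unit_valued (disc_vals \<eta> \<pi> \<psi>)"
  unfolding unit_valued_def disc_vals_def vals_def discounting_def by (simp add: mult_le_one)

lemma val_unit: "well_discounted \<psi> \<Longrightarrow> 0 \<le> val \<pi> \<psi> \<and> val \<pi> \<psi> \<le> 1"
proof (induction \<psi> arbitrary: \<pi>)
  case (Until f g)
  hence "unit_valued (vals \<pi> g)" "unit_valued (vals \<pi> f)"
    by (auto simp: unit_valued_def vals_def)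
  thus ?case by (simp add: val_Until until_sup_unit)
next
  case (DUntil f \<eta> g)
  hence "unit_valued (vals \<pi> g)" "unit_valued (vals \<pi> f)"
    by (auto simp: unit_valued_def vals_def)
  with DUntil.prems show ?case
    by (simp add: val_DUntil until_sup_unit unit_valued_disc_vals)
qed (auto simp: max_def)

lemma unit_valued_vals: "well_discounted \<psi> \<Longrightarrow> unit_valued (vals \<pi> \<psi>)"
  by (simp add: unit_valued_def vals_def val_unit)

lemma finite_range_vals:
  "finite (range (\<lambda>i. suffix_comp i \<pi>)) \<Longrightarrow> finite (range (vals \<pi> \<psi>))"
proof -
  assume "finite (range (\<lambda>i. suffix_comp i \<pi>))"
  hence "finite ((\<lambda>\<rho>. val \<rho> \<psi>) ` range (\<lambda>i. suffix_comp i \<pi>))" by simp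
  thus ?thesis unfolding vals_def by (simp add: image_image)
qed

lemma val_Until_unfold:
  assumes "well_discounted f" "well_discounted g"
  shows "val \<pi> (Until f g) = max (val \<pi> g) (min (val \<pi> f) (val (suffix_comp 1 \<pi>) (Until f g)))"
  using until_sup_unfold[OF unit_valued_vals[OF assms(2)] unit_valued_vals[OF assms(1)], of \<pi> \<pi>]
  unfolding val_Until vals_Suc vals_0 .

lemma val_DUntil_unfold:
  assumes "discounting \<eta>" "well_discounted f" "well_discounted g"
  shows "val \<pi> (DUntil f \<eta> g) =
    max (\<eta> 0 * val \<pi> g) (min (\<eta> 0 * val \<pi> f) (val (suffix_comp 1 \<pi>) (DUntil f (shift_by 1 \<eta>) g)))"
  using until_sup_unfold[OF unit_valued_disc_vals[OF assms(1) unit_valued_vals[OF assms(3)]]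
      unit_valued_disc_vals[OF assms(1) unit_valued_vals[OF assms(2)]], of \<pi> \<pi>]
  unfolding val_DUntil disc_vals_Suc disc_vals_0 .

lemma val_DUntil_le:
  assumes "discounting \<eta>" "well_discounted g"
  shows "val \<pi> (DUntil f \<eta> g) \<le> \<eta> 0"
  unfolding val_DUntil
proof (rule until_sup_le)
  fix i
  have "until_term (disc_vals \<eta> \<pi> g) (disc_vals \<eta> \<pi> f) i \<le> \<eta> i * val (suffix_comp i \<pi>) g"
    using until_term_le by (simp add: disc_vals_def)
  also have "\<dots> \<le> \<eta> i"
    using val_unit[OF assms(2)] discounting_pos[OF assms(1)] by (simp add: mult_left_le)
  also have "\<dots> \<le> \<eta> 0" using discounting_antimono[OF assms(1)] by simp
  finally show "until_term (disc_vals \<eta> \<pi> g) (disc_vals \<eta> \<pi> f) i \<le> \<eta> 0" .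
qed

lemma val_DUntil_pos_iff:
  assumes "discounting \<eta>" "well_discounted f" "well_discounted g"
  shows "0 < val \<pi> (DUntil f \<eta> g) \<longleftrightarrow> 0 < val \<pi> (Until f g)"
proof -
  have "0 < \<eta> i" for i by (rule discounting_pos[OF assms(1)])
  hence "0 < until_term (disc_vals \<eta> \<pi> g) (disc_vals \<eta> \<pi> f) i \<longleftrightarrow> 0 < until_term (vals \<pi> g) (vals \<pi> f) i" for i
    by (simp add: less_until_term_iff disc_vals_def vals_def zero_less_mult_iff) (meson less_asym)
  thus ?thesis using assms
    by (simp add: val_Until val_DUntil less_until_sup_iff unit_valued_vals unit_valued_disc_vals)
qed

lemma pbf_sat_mono_atoms:
  "pbf_sat X \<phi> \<Longrightarrow> (\<And>q. q \<in> pbf_atoms \<phi> \<Longrightarrow> q \<in> X \<Longrightarrow> q \<in> Y) \<Longrightarrow> pbf_sat Y \<phi>"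
  by (induction \<phi>) auto

lemma pbf_sat_witness: "pbf_sat S \<phi> \<Longrightarrow> \<not> pbf_sat T \<phi> \<Longrightarrow> \<exists>q\<in>S \<inter> pbf_atoms \<phi>. q \<notin> T"
  by (induction \<phi>) auto

lemma pbf_sat_map_pbf: "pbf_sat S (map_pbf f \<phi>) \<longleftrightarrow> pbf_sat (f -` S) \<phi>"
  by (induction \<phi>) auto

lemma pbf_atoms_map_pbf: "pbf_atoms (map_pbf f \<phi>) = f ` pbf_atoms \<phi>"
  by (induction \<phi>) auto

section \<open>Ranked alternating automata\<close>

definition ranked_aba :: "'s aba \<Rightarrow> (nat \<Rightarrow> 'r::wellorder) \<Rightarrow> bool" where
  "ranked_aba A \<mu> \<longleftrightarrow> (\<forall>q\<in>states A. \<forall>\<sigma>. \<forall>q'\<in>pbf_atoms (aba.trans A q \<sigma>).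
     q' \<in> states A \<and> (q' = q \<or> \<mu> q' < \<mu> q))"

lemma eventually_constant_if_nonincreasing:
  fixes \<mu> :: "'a \<Rightarrow> 'r::wellorder"
  assumes "\<And>i. p (Suc i) = p i \<or> \<mu> (p (Suc i)) < \<mu> (p i)"
  obtains N where "\<And>i. N \<le> i \<Longrightarrow> p i = p N"
proof -
  obtain N where N: "\<mu> (p N) = (LEAST r. r \<in> range (\<mu> \<circ> p))"
    by (metis (mono_tags) LeastI comp_apply rangeE rangeI)
  have least: "\<mu> (p N) \<le> \<mu> (p j)" for j unfolding N by (rule Least_le) simp
  have "p i = p N" if "N \<le> i" for i
    using that
  proof (induction rule: dec_induct)
    case (step n) thus ?case using assms[of n] least[of "Suc n"] by (metis leD)
  qed simp
  thus thesis by (rule that)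
qed

lemma ranked_path_stabilizes:
  assumes "ranked_aba A \<mu>" "\<And>i. p i \<in> states A" "\<And>i. p (Suc i) \<in> pbf_atoms (aba.trans A (p i) (w i))"
  obtains N where "\<And>i. N \<le> i \<Longrightarrow> p i = p N"
proof -
  have "p (Suc i) = p i \<or> \<mu> (p (Suc i)) < \<mu> (p i)" for i
    using assms unfolding ranked_aba_def by blast
  thus thesis using that by (rule eventually_constant_if_nonincreasing)
qed

lemma no_eventually_decreasing_nat: "\<not> (\<forall>i\<ge>N. (f :: nat \<Rightarrow> nat) (Suc i) < f i)"
proof
  assume dec: "\<forall>i\<ge>N. f (Suc i) < f i"
  have "f (N + k) + k \<le> f N" for k
  proof (induction k)
    case (Suc k)
    have "f (Suc (N + k)) < f (N + k)" using dec by simp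
    thus ?case using Suc.IH by simp
  qed simp
  from this[of "Suc (f N)"] show False by simp
qed

lemma weak_aba_if_ranked:
  assumes "finite (states A)" "ranked_aba A \<mu>"
  shows "weak_aba A"
proof -
  define P where "P = (\<lambda>q. {q}) ` states A"
  define r where "r = {({q'}, {q}) | q q'. q \<in> states A \<and> q' \<in> states A \<and> (q' = q \<or> \<mu> q' < \<mu> q)}"
  have "partition_on (states A) P"
    unfolding partition_on_def disjoint_def P_def by auto
  moreover have "partial_order_on P r"
    unfolding partial_order_on_def preorder_on_def refl_on_def r_def P_def
    by (auto intro!: transI antisymI)
  moreover have "({q'}, {q}) \<in> r" if "q \<in> states A" "q' \<in> pbf_atoms (aba.trans A q \<sigma>)" for q q' \<sigma>
    using assms(2) that unfolding ranked_aba_def r_def by blast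
  ultimately show ?thesis
    unfolding weak_aba_def using assms(1) by (intro exI[of _ P] exI[of _ r]) (auto simp: P_def)
qed

text \<open>In a ranked automaton every path of a run is eventually stuck in a self-loop, so acceptance
  is decided by whether that state is accepting; a rank that strictly decreases along non-accepting
  (resp. accepting) self-transitions then certifies acceptance (resp. rejection).\<close>

lemma accepts_if_ranked:
  fixes rank :: "nat \<Rightarrow> 's comp \<Rightarrow> nat"
  assumes ranked: "ranked_aba A \<mu>" and init: "init A \<in> states A"
    and step: "\<And>q \<pi>. q \<in> states A \<Longrightarrow> Good q \<pi> \<Longrightarrow> pbf_sat {q'. Good q' (suffix_comp 1 \<pi>) \<and>
       (q' = q \<and> q \<notin> acc A \<longrightarrow> rank q (suffix_comp 1 \<pi>) < rank q \<pi>)} (aba.trans A q (\<pi> 0))"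
    and good: "Good (init A) \<pi>"
  shows "accepts A \<pi>"
proof -
  define E where "E l q = (if q \<in> states A \<and> Good q (suffix_comp l \<pi>) then
      {q' \<in> pbf_atoms (aba.trans A q (\<pi> l)). Good q' (suffix_comp (Suc l) \<pi>) \<and>
        (q' = q \<and> q \<notin> acc A \<longrightarrow> rank q (suffix_comp (Suc l) \<pi>) < rank q (suffix_comp l \<pi>))}
      else {})" for l q
  define R where "R = rec_nat {init A} (\<lambda>l X. \<Union>q\<in>X. E l q)"
  have E_good: "q' \<in> states A \<and> Good q' (suffix_comp (Suc l) \<pi>)" if "q' \<in> E l q" for l q q'
    using that ranked unfolding E_def ranked_aba_def by (auto split: if_splits)
  have R_good: "q \<in> states A \<and> Good q (suffix_comp l \<pi>)" if "q \<in> R l" for l q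
    using that by (induction l arbitrary: q) (auto simp: R_def init good dest: E_good)
  have "pbf_sat (E l q) (aba.trans A q (\<pi> l))" if "q \<in> R l" for l q
    using step[of q "suffix_comp l \<pi>"] R_good[OF that]
    by (auto simp: E_def intro: pbf_sat_mono_atoms)
  hence run: "is_run A \<pi> R E"
    unfolding is_run_def using R_good by (auto simp: R_def)
  have "\<exists>\<^sub>\<infinity>i. p i \<in> acc A" if path: "run_path A E p" for p
  proof -
    have in_E: "p (Suc i) \<in> E i (p i)" for i using path by (simp add: run_path_def)
    have good_p: "p i \<in> states A \<and> Good (p i) (suffix_comp i \<pi>)" for i
      using path E_good by (cases i) (auto simp: run_path_def init good)
    have atom: "p (Suc i) \<in> pbf_atoms (aba.trans A (p i) (\<pi> i))" for i
      using in_E[of i] good_p[of i] by (simp add: E_def)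
    have "p i \<in> states A" for i using good_p by blast
    from ranked this atom obtain N where N: "\<And>i. N \<le> i \<Longrightarrow> p i = p N"
      by (rule ranked_path_stabilizes) blast
    show ?thesis
    proof (cases "p N \<in> acc A")
      case True
      have "p (max m N) \<in> acc A" for m using N[of "max m N"] True by simp
      thus ?thesis unfolding INFM_nat_le by (meson max.cobounded1)
    next
      case False
      have "rank (p N) (suffix_comp (Suc i) \<pi>) < rank (p N) (suffix_comp i \<pi>)" if "N \<le> i" for i
        using in_E[of i] good_p[of i] N[of i] N[of "Suc i"] False that by (simp add: E_def)
      thus ?thesis
        using no_eventually_decreasing_nat[of N "\<lambda>i. rank (p N) (suffix_comp i \<pi>)"] by blast
    qed
  qed
  hence "accepting_run A E" by (simp add: accepting_run_def)
  thus ?thesis using run unfolding accepts_def by blast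
qed

lemma not_accepts_if_ranked:
  fixes rank :: "nat \<Rightarrow> 's comp \<Rightarrow> nat"
  assumes ranked: "ranked_aba A \<mu>"
    and step: "\<And>q \<pi> S. q \<in> states A \<Longrightarrow> Bad q \<pi> \<Longrightarrow> pbf_sat S (aba.trans A q (\<pi> 0)) \<Longrightarrow>
       \<exists>q'\<in>S \<inter> pbf_atoms (aba.trans A q (\<pi> 0)). Bad q' (suffix_comp 1 \<pi>) \<and>
         (q' = q \<and> q \<in> acc A \<longrightarrow> rank q (suffix_comp 1 \<pi>) < rank q \<pi>)"
    and bad: "Bad (init A) \<pi>"
  shows "\<not> accepts A \<pi>"
proof
  assume "accepts A \<pi>"
  then obtain R E where run: "is_run A \<pi> R E" and acc_run: "accepting_run A E"
    unfolding accepts_def by blast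
  define P where "P i q q' \<longleftrightarrow> q' \<in> E i q \<inter> pbf_atoms (aba.trans A q (\<pi> i)) \<and>
      Bad q' (suffix_comp (Suc i) \<pi>) \<and>
      (q' = q \<and> q \<in> acc A \<longrightarrow> rank q (suffix_comp (Suc i) \<pi>) < rank q (suffix_comp i \<pi>))" for i q q'
  define p where "p = rec_nat (init A) (\<lambda>i q. SOME q'. P i q q')"
  have P_ex: "P i q (SOME q'. P i q q')" if "q \<in> R i" "Bad q (suffix_comp i \<pi>)" for i q
  proof (rule someI_ex)
    have "q \<in> states A" "pbf_sat (E i q) (aba.trans A q (suffix_comp i \<pi> 0))"
      using run that(1) unfolding is_run_def by auto
    from step[OF this(1) that(2) this(2)] show "\<exists>q'. P i q q'" unfolding P_def by auto
  qed
  have inv: "p i \<in> R i \<and> Bad (p i) (suffix_comp i \<pi>)" for i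
  proof (induction i)
    case 0
    show ?case using run bad by (simp add: p_def is_run_def)
  next
    case (Suc i)
    hence "P i (p i) (p (Suc i))" using P_ex by (simp add: p_def)
    thus ?case using Suc run unfolding is_run_def P_def by auto
  qed
  have P_p: "P i (p i) (p (Suc i))" for i using P_ex inv by (simp add: p_def)
  have "p (Suc i) \<in> E i (p i)" for i using P_p[of i] by (simp add: P_def)
  hence "run_path A E p" by (simp add: run_path_def p_def)
  hence inf_acc: "\<exists>\<^sub>\<infinity>i. p i \<in> acc A" using acc_run by (simp add: accepting_run_def)
  have "p i \<in> states A" "p (Suc i) \<in> pbf_atoms (aba.trans A (p i) (\<pi> i))" for i
    using inv[of i] P_p[of i] run unfolding is_run_def P_def by auto
  with ranked obtain N where N: "\<And>i. N \<le> i \<Longrightarrow> p i = p N"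
    by (rule ranked_path_stabilizes) blast
  obtain n where "N \<le> n" "p n \<in> acc A" using inf_acc unfolding INFM_nat_le by blast
  hence "rank (p N) (suffix_comp (Suc i) \<pi>) < rank (p N) (suffix_comp i \<pi>)" if "N \<le> i" for i
    using P_p[of i] N[of i] N[of "Suc i"] N[of n] that by (simp add: P_def)
  thus False using no_eventually_decreasing_nat[of N "\<lambda>i. rank (p N) (suffix_comp i \<pi>)"] by blast
qed

section \<open>Threshold states and their transitions\<close>

datatype mode = Gt | Lt

type_synonym 'ap state = "'ap ltld \<times> mode \<times> real"

fun holds :: "'ap state \<Rightarrow> 'ap comp \<Rightarrow> bool" where
  "holds (\<psi>, Gt, t) \<pi> \<longleftrightarrow> t < val \<pi> \<psi>"
| "holds (\<psi>, Lt, t) \<pi> \<longleftrightarrow> val \<pi> \<psi> < t"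

text \<open>With threshold 0 a discounted until holds iff the undiscounted one does, as all discount
  factors are positive; this case cannot be unfolded, since \<eta> never drops below 0.\<close>

fun delta :: "'ap state \<Rightarrow> 'ap set \<Rightarrow> 'ap state pbf" where
  "delta (LTrue, Gt, t) \<sigma> = (if t < 1 then PTrue else PFalse)"
| "delta (LTrue, Lt, t) \<sigma> = (if 1 < t then PTrue else PFalse)"
| "delta (Prop p, Gt, t) \<sigma> = (if t < (if p \<in> \<sigma> then 1 else 0) then PTrue else PFalse)"
| "delta (Prop p, Lt, t) \<sigma> = (if (if p \<in> \<sigma> then 1 else 0) < t then PTrue else PFalse)"
| "delta (Neg f, Gt, t) \<sigma> = delta (f, Lt, 1 - t) \<sigma>"
| "delta (Neg f, Lt, t) \<sigma> = delta (f, Gt, 1 - t) \<sigma>"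
| "delta (Or f g, Gt, t) \<sigma> = POr (delta (f, Gt, t) \<sigma>) (delta (g, Gt, t) \<sigma>)"
| "delta (Or f g, Lt, t) \<sigma> = PAnd (delta (f, Lt, t) \<sigma>) (delta (g, Lt, t) \<sigma>)"
| "delta (Next f, m, t) \<sigma> = PVar (f, m, t)"
| "delta (Until f g, Gt, t) \<sigma> =
     POr (delta (g, Gt, t) \<sigma>) (PAnd (delta (f, Gt, t) \<sigma>) (PVar (Until f g, Gt, t)))"
| "delta (Until f g, Lt, t) \<sigma> =
     PAnd (delta (g, Lt, t) \<sigma>) (POr (delta (f, Lt, t) \<sigma>) (PVar (Until f g, Lt, t)))"
| "delta (DUntil f \<eta> g, Gt, t) \<sigma> =
     (if t < 0 then PTrue
      else if t = 0 then POr (delta (g, Gt, 0) \<sigma>) (PAnd (delta (f, Gt, 0) \<sigma>) (PVar (Until f g, Gt, 0)))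
      else if \<eta> 0 \<le> t then PFalse
      else POr (delta (g, Gt, t / \<eta> 0) \<sigma>)
             (PAnd (delta (f, Gt, t / \<eta> 0) \<sigma>) (PVar (DUntil f (shift_by 1 \<eta>) g, Gt, t))))"
| "delta (DUntil f \<eta> g, Lt, t) \<sigma> =
     (if t \<le> 0 then PFalse
      else if \<eta> 0 < t then PTrue
      else PAnd (delta (g, Lt, t / \<eta> 0) \<sigma>)
             (POr (delta (f, Lt, t / \<eta> 0) \<sigma>) (PVar (DUntil f (shift_by 1 \<eta>) g, Lt, t))))"

lemma delta_correct:
  assumes "well_discounted \<psi>"
  shows "pbf_sat {q. holds q (suffix_comp 1 \<pi>)} (delta (\<psi>, m, t) (\<pi> 0)) \<longleftrightarrow> holds (\<psi>, m, t) \<pi>"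
  using assms
proof (induction \<psi> arbitrary: m t)
  case (Until f g)
  thus ?case by (cases m) (auto simp: val_Until_unfold[of f g \<pi>])
next
  case (DUntil f \<eta> g)
  hence d: "discounting \<eta>" and wf: "well_discounted f" "well_discounted g" by simp_all
  have \<eta>0: "0 < \<eta> 0" by (rule discounting_pos[OF d])
  have bounds: "0 \<le> val \<pi> (DUntil f \<eta> g)" "val \<pi> (DUntil f \<eta> g) \<le> \<eta> 0"
    using val_unit[of "DUntil f \<eta> g" \<pi>] val_DUntil_le[OF d wf(2)] DUntil.prems by simp_all
  have scale: "t / \<eta> 0 < x \<longleftrightarrow> t < \<eta> 0 * x" "x < t / \<eta> 0 \<longleftrightarrow> \<eta> 0 * x < t" for x
    using \<eta>0 by (simp_all add: pos_divide_less_eq pos_less_divide_eq mult.commute)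
  show ?case
  proof (cases m)
    case Gt
    consider "t < 0" | "t = 0" | "0 < t" "\<eta> 0 \<le> t" | "0 < t" "t < \<eta> 0" by fastforce
    thus ?thesis
    proof cases
      case 2
      thus ?thesis using DUntil.IH Gt wf val_DUntil_pos_iff[OF d wf, of \<pi>]
        by (auto simp: val_Until_unfold[OF wf, of \<pi>])
    next
      case 4
      thus ?thesis using DUntil.IH Gt wf scale
        by (auto simp: val_DUntil_unfold[OF d wf, of \<pi>])
    qed (use Gt bounds in auto)
  next
    case Lt
    consider "t \<le> 0" | "0 < t" "\<eta> 0 < t" | "0 < t" "t \<le> \<eta> 0" by fastforce
    thus ?thesis
    proof cases
      case 3
      thus ?thesis using DUntil.IH Lt wf scale
        by (auto simp: val_DUntil_unfold[OF d wf, of \<pi>])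
    qed (use Lt bounds in auto)
  qed
qed (case_tac m; auto)+

lemma size_atoms_delta: "q' \<in> pbf_atoms (delta q \<sigma>) \<Longrightarrow> size (fst q') \<le> size (fst q)"
  by (induction q \<sigma> rule: delta.induct) (auto split: if_splits)

lemma well_discounted_atoms_delta:
  "well_discounted (fst q) \<Longrightarrow> q' \<in> pbf_atoms (delta q \<sigma>) \<Longrightarrow> well_discounted (fst q')"
  by (induction q \<sigma> rule: delta.induct) (auto simp: discounting_shift_by split: if_splits)

fun horizon_rank :: "'ap state \<Rightarrow> nat" where
  "horizon_rank (DUntil f \<eta> g, m, t) = Suc (if 0 < t then disc_horizon \<eta> t else 0)"
| "horizon_rank q = 0"

definition state_rank :: "'ap state \<Rightarrow> nat \<times> nat" where
  "state_rank q = (size (fst q), horizon_rank q)"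

fun is_until :: "'ap ltld \<Rightarrow> bool" where
  "is_until (Until f g) = True"
| "is_until _ = False"

text \<open>The second component bounds how often a discounted until can still be unfolded.\<close>

lemma state_rank_atoms_delta:
  assumes "well_discounted (fst q)" "q' \<in> pbf_atoms (delta q \<sigma>)"
  shows "state_rank q' < state_rank q \<or> q' = q \<and> is_until (fst q)"
proof -
  obtain \<psi> m t where q: "q = (\<psi>, m, t)" by (metis prod.exhaust)
  have sub: "state_rank q' < state_rank q" if "q' \<in> pbf_atoms (delta (f, m', t') \<sigma>)" "size f < size \<psi>" for f m' t'
    using size_atoms_delta[OF that(1)] that(2) by (simp add: state_rank_def q)
  show ?thesis
  proof (cases \<psi>)
    case (DUntil f \<eta> g)
    have d: "discounting \<eta>" using assms(1) DUntil q by simp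
    thus ?thesis using assms(2) sub disc_horizon_shift[OF d] unfolding q DUntil
      by (cases m) (auto simp: state_rank_def split: if_splits)
  qed (use assms(2) sub in \<open>cases m; auto simp: q state_rank_def split: if_splits\<close>)+
qed

fun accepting :: "'ap state \<Rightarrow> bool" where
  "accepting (Until f g, Lt, t) = True"
| "accepting _ = False"

fun until_rank :: "'ap state \<Rightarrow> 'ap comp \<Rightarrow> nat" where
  "until_rank (Until f g, Gt, t) \<pi> = (LEAST i. t < until_term (vals \<pi> g) (vals \<pi> f) i)"
| "until_rank (Until f g, Lt, t) \<pi> = (LEAST i. \<not> until_term (vals \<pi> g) (vals \<pi> f) i < t)"
| "until_rank _ \<pi> = 0"

lemma delta_sat_if_holds:
  assumes "well_discounted (fst q)" "holds q \<pi>"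
  shows "pbf_sat {q'. holds q' (suffix_comp 1 \<pi>) \<and>
      (q' = q \<and> \<not> accepting q \<longrightarrow> until_rank q (suffix_comp 1 \<pi>) < until_rank q \<pi>)} (delta q (\<pi> 0))"
    (is "pbf_sat ?G _")
proof -
  let ?H = "{q. holds q (suffix_comp 1 \<pi>)}"
  obtain \<psi> m t where q: "q = (\<psi>, m, t)" by (metis prod.exhaust)
  have holds_sat: "pbf_sat ?H (delta (\<phi>, m', t') (\<pi> 0))" if "well_discounted \<phi>" "holds (\<phi>, m', t') \<pi>" for \<phi> m' t'
    using delta_correct[OF that(1)] that(2) by blast
  show ?thesis
  proof (cases "\<exists>f g. \<psi> = Until f g \<and> m = Gt")
    case True
    then obtain f g where U: "\<psi> = Until f g" "m = Gt" by blast
    have wf: "well_discounted f" "well_discounted g" using assms(1) q U by auto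
    have sub: "pbf_sat ?G (delta (\<phi>, m', t') (\<pi> 0))"
      if "well_discounted \<phi>" "holds (\<phi>, m', t') \<pi>" "size \<phi> < size \<psi>" for \<phi> m' t'
      using holds_sat[OF that(1,2)]
      by (rule pbf_sat_mono_atoms) (use size_atoms_delta that(3) q in fastforce)
    show ?thesis
    proof (cases "t < val \<pi> g")
      case True
      thus ?thesis using sub[OF wf(2)] q U by simp
    next
      case False
      have "t < val \<pi> (Until f g)" using assms(2) q U by simp
      hence "t < val \<pi> f" "t < val (suffix_comp 1 \<pi>) (Until f g)"
        using False val_Until_unfold[OF wf, of \<pi>] by auto
      moreover have "until_rank q (suffix_comp 1 \<pi>) < until_rank q \<pi>"
        using until_witness_decreases[OF unit_valued_vals[OF wf(2)] unit_valued_vals[OF wf(1)], of t \<pi>]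
          \<open>t < val \<pi> (Until f g)\<close> False by (simp add: q U val_Until)
      ultimately show ?thesis using sub[OF wf(1)] q U by simp
    qed
  next
    case False
    have "q' \<in> ?G" if "q' \<in> pbf_atoms (delta q (\<pi> 0))" "q' \<in> ?H" for q'
      using state_rank_atoms_delta[OF assms(1) that(1)] that(2) False q
      by (cases \<psi>; cases m) auto
    thus ?thesis using holds_sat[of \<psi> m t] assms q by (auto intro: pbf_sat_mono_atoms)
  qed
qed

lemma delta_refuted_if_not_holds:
  assumes "well_discounted (fst q)" "finite (range (\<lambda>i. suffix_comp i \<pi>))" "\<not> holds q \<pi>"
    and "pbf_sat S (delta q (\<pi> 0))"
  shows "\<exists>q'\<in>S \<inter> pbf_atoms (delta q (\<pi> 0)). \<not> holds q' (suffix_comp 1 \<pi>) \<and>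
      (q' = q \<and> accepting q \<longrightarrow> until_rank q (suffix_comp 1 \<pi>) < until_rank q \<pi>)"
proof -
  let ?H = "{q. holds q (suffix_comp 1 \<pi>)}"
  obtain \<psi> m t where q: "q = (\<psi>, m, t)" by (metis prod.exhaust)
  have witness: "\<exists>q'\<in>S \<inter> pbf_atoms (delta (\<phi>, m', t') (\<pi> 0)). q' \<notin> ?H"
    if "well_discounted \<phi>" "\<not> holds (\<phi>, m', t') \<pi>" "pbf_sat S (delta (\<phi>, m', t') (\<pi> 0))" for \<phi> m' t'
    using delta_correct[OF that(1)] that(2,3) by (blast intro: pbf_sat_witness)
  show ?thesis
  proof (cases "accepting q")
    case True
    then obtain f g where U: "\<psi> = Until f g" "m = Lt" using q by (cases \<psi>; cases m) auto
    have wf: "well_discounted f" "well_discounted g" using assms(1) q U by auto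
    have sub: "\<exists>q'\<in>S \<inter> pbf_atoms (delta q (\<pi> 0)). \<not> holds q' (suffix_comp 1 \<pi>) \<and> q' \<noteq> q"
      if "well_discounted \<phi>" "\<not> holds (\<phi>, Lt, t) \<pi>" "pbf_sat S (delta (\<phi>, Lt, t) (\<pi> 0))"
        "size \<phi> < size \<psi>" "pbf_atoms (delta (\<phi>, Lt, t) (\<pi> 0)) \<subseteq> pbf_atoms (delta q (\<pi> 0))" for \<phi>
      using witness[OF that(1-3)] size_atoms_delta[of _ "(\<phi>, Lt, t)"] that(4,5) q by fastforce
    have nU: "\<not> val \<pi> (Until f g) < t" using assms(3) q U by simp
    show ?thesis
    proof (cases "val \<pi> g < t")
      case False
      thus ?thesis using sub[OF wf(2)] assms(4) q U by auto
    next
      case True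
      hence nf: "\<not> val \<pi> f < t" and nU': "\<not> val (suffix_comp 1 \<pi>) (Until f g) < t"
        using nU val_Until_unfold[OF wf, of \<pi>] by auto
      have "finite (range (until_term (vals \<pi> g) (vals \<pi> f)))"
        using assms(2) by (intro finite_range_until_term finite_range_vals)
      hence rank: "until_rank q (suffix_comp 1 \<pi>) < until_rank q \<pi>"
        using until_counterwitness_decreases[of "vals \<pi> g" "vals \<pi> f" t] nU True
        by (simp add: q U val_Until)
      have "pbf_sat S (delta (f, Lt, t) (\<pi> 0)) \<or> q \<in> S" using assms(4) q U by simp
      thus ?thesis
      proof
        assume "pbf_sat S (delta (f, Lt, t) (\<pi> 0))"
        thus ?thesis using sub[OF wf(1)] nf q U by auto
      next
        assume "q \<in> S"
        thus ?thesis using nU' rank q U by (intro bexI[of _ q]) auto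
      qed
    qed
  next
    case False
    thus ?thesis using witness[of \<psi> m t] assms q by auto
  qed
qed

definition ranked_on :: "'q set \<Rightarrow> ('q \<Rightarrow> 's \<Rightarrow> 'q pbf) \<Rightarrow> ('q \<Rightarrow> 'r::wellorder) \<Rightarrow> bool" where
  "ranked_on Q \<delta> \<mu> \<longleftrightarrow> (\<forall>q\<in>Q. \<forall>\<sigma>. \<forall>q'\<in>pbf_atoms (\<delta> q \<sigma>). q' \<in> Q \<and> (q' = q \<or> \<mu> q' < \<mu> q))"

definition encode :: "'q set \<Rightarrow> 'q \<Rightarrow> nat" where
  "encode Q = (SOME e. inj_on e Q)"

lemma inj_on_encode:
  fixes Q :: "'q set"
  assumes "finite Q" shows "inj_on (encode Q) Q"
proof -
  obtain f :: "'q \<Rightarrow> nat" and n where "inj_on f Q"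
    using finite_imp_inj_to_nat_seg[OF assms] by blast
  thus ?thesis unfolding encode_def by (rule someI[where P = "\<lambda>e. inj_on e Q"])
qed

text \<open>States outside the encoded state space are never reached; their transitions are arbitrary.\<close>

definition aba_of :: "'q set \<Rightarrow> 'q \<Rightarrow> ('q \<Rightarrow> 's \<Rightarrow> 'q pbf) \<Rightarrow> 'q set \<Rightarrow> 's aba" where
  "aba_of Q q0 \<delta> F = \<lparr>states = encode Q ` Q, init = encode Q q0,
     trans = (\<lambda>k \<sigma>. map_pbf (encode Q) (\<delta> (the_inv_into Q (encode Q) k) \<sigma>)),
     acc = encode Q ` (Q \<inter> F)\<rparr>"

context
  fixes Q :: "'q set" and q0 :: 'q and \<delta> :: "'q \<Rightarrow> 'a set \<Rightarrow> 'q pbf" and F :: "'q set"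
    and \<mu> :: "'q \<Rightarrow> 'r::wellorder"
  assumes finite: "finite Q" and ranked: "ranked_on Q \<delta> \<mu>" and init: "q0 \<in> Q"
begin

private abbreviation "e \<equiv> encode Q"

private lemma decode [simp]: "q \<in> Q \<Longrightarrow> the_inv_into Q e (e q) = q"
  using inj_on_encode[OF finite] by (rule the_inv_into_f_f)

private lemma trans_aba_of: "q \<in> Q \<Longrightarrow> aba.trans (aba_of Q q0 \<delta> F) (e q) \<sigma> = map_pbf e (\<delta> q \<sigma>)"
  by (simp add: aba_of_def)

lemma wf_aba_of: "wf_aba (aba_of Q q0 \<delta> F)"
  using finite ranked init unfolding wf_aba_def ranked_on_def
  by (auto simp: aba_of_def pbf_atoms_map_pbf)

lemma ranked_aba_of: "ranked_aba (aba_of Q q0 \<delta> F) (\<mu> \<circ> the_inv_into Q e)"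
  using ranked inj_on_encode[OF finite]
  unfolding ranked_aba_def ranked_on_def by (fastforce simp: aba_of_def pbf_atoms_map_pbf)

lemma weak_aba_of: "weak_aba (aba_of Q q0 \<delta> F)"
  using finite ranked_aba_of by (intro weak_aba_if_ranked) (simp add: aba_of_def)

lemma accepts_aba_of:
  fixes rank :: "'q \<Rightarrow> 'a comp \<Rightarrow> nat"
  assumes step: "\<And>q \<pi>. q \<in> Q \<Longrightarrow> Good q \<pi> \<Longrightarrow> pbf_sat {q'. Good q' (suffix_comp 1 \<pi>) \<and>
       (q' = q \<and> q \<notin> F \<longrightarrow> rank q (suffix_comp 1 \<pi>) < rank q \<pi>)} (\<delta> q (\<pi> 0))"
    and good: "Good q0 \<pi>"
  shows "accepts (aba_of Q q0 \<delta> F) \<pi>"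
proof (rule accepts_if_ranked[OF ranked_aba_of])
  let ?d = "the_inv_into Q e"
  show "init (aba_of Q q0 \<delta> F) \<in> states (aba_of Q q0 \<delta> F)" using init by (simp add: aba_of_def)
  show "Good (?d (init (aba_of Q q0 \<delta> F))) \<pi>" using good init by (simp add: aba_of_def)
  fix k \<pi>' assume "k \<in> states (aba_of Q q0 \<delta> F)" "Good (?d k) \<pi>'"
  then obtain q where q: "q \<in> Q" "k = e q" "Good q \<pi>'" by (auto simp: aba_of_def)
  have "pbf_sat (e -` {k'. Good (?d k') (suffix_comp 1 \<pi>') \<and>
      (k' = k \<and> k \<notin> acc (aba_of Q q0 \<delta> F) \<longrightarrow> rank (?d k) (suffix_comp 1 \<pi>') < rank (?d k) \<pi>')}) (\<delta> q (\<pi>' 0))"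
    using step[OF q(1,3)] ranked q(1) inj_on_encode[OF finite]
    by (rule_tac pbf_sat_mono_atoms) (auto simp: q(2) ranked_on_def aba_of_def inj_on_eq_iff)
  thus "pbf_sat {k'. Good (?d k') (suffix_comp 1 \<pi>') \<and>
      (k' = k \<and> k \<notin> acc (aba_of Q q0 \<delta> F) \<longrightarrow> rank (?d k) (suffix_comp 1 \<pi>') < rank (?d k) \<pi>')}
      (aba.trans (aba_of Q q0 \<delta> F) k (\<pi>' 0))"
    using q by (simp add: trans_aba_of pbf_sat_map_pbf)
qed

lemma not_accepts_aba_of:
  fixes rank :: "'q \<Rightarrow> 'a comp \<Rightarrow> nat"
  assumes step: "\<And>q \<pi> S. q \<in> Q \<Longrightarrow> Bad q \<pi> \<Longrightarrow> pbf_sat S (\<delta> q (\<pi> 0)) \<Longrightarrow>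
       \<exists>q'\<in>S \<inter> pbf_atoms (\<delta> q (\<pi> 0)). Bad q' (suffix_comp 1 \<pi>) \<and>
         (q' = q \<and> q \<in> F \<longrightarrow> rank q (suffix_comp 1 \<pi>) < rank q \<pi>)"
    and bad: "Bad q0 \<pi>"
  shows "\<not> accepts (aba_of Q q0 \<delta> F) \<pi>"
proof (rule not_accepts_if_ranked[OF ranked_aba_of])
  let ?d = "the_inv_into Q e"
  show "Bad (?d (init (aba_of Q q0 \<delta> F))) \<pi>" using bad init by (simp add: aba_of_def)
  fix k \<pi>' S assume "k \<in> states (aba_of Q q0 \<delta> F)" "Bad (?d k) \<pi>'"
    and sat: "pbf_sat S (aba.trans (aba_of Q q0 \<delta> F) k (\<pi>' 0))"
  then obtain q where q: "q \<in> Q" "k = e q" "Bad q \<pi>'" by (auto simp: aba_of_def)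
  have "pbf_sat (e -` S) (\<delta> q (\<pi>' 0))" using sat q by (simp add: trans_aba_of pbf_sat_map_pbf)
  from step[OF q(1,3) this] obtain q' where q': "q' \<in> pbf_atoms (\<delta> q (\<pi>' 0))" "e q' \<in> S"
      "Bad q' (suffix_comp 1 \<pi>')" "q' = q \<and> q \<in> F \<longrightarrow> rank q (suffix_comp 1 \<pi>') < rank q \<pi>'"
    by blast
  have "q' \<in> Q" using ranked q(1) q'(1) unfolding ranked_on_def by blast
  thus "\<exists>k'\<in>S \<inter> pbf_atoms (aba.trans (aba_of Q q0 \<delta> F) k (\<pi>' 0)). Bad (?d k') (suffix_comp 1 \<pi>') \<and>
      (k' = k \<and> k \<in> acc (aba_of Q q0 \<delta> F) \<longrightarrow> rank (?d k) (suffix_comp 1 \<pi>') < rank (?d k) \<pi>')"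
    using q q' inj_on_encode[OF finite]
    by (intro bexI[of _ "e q'"]) (auto simp: trans_aba_of pbf_atoms_map_pbf aba_of_def inj_on_eq_iff)
qed

end


section \<open>The automaton of a formula\<close>

lemma finite_rtrancl_Image_if_ranked:
  fixes \<mu> :: "'a \<Rightarrow> 'r::wellorder"
  assumes branching: "\<And>x. finite (R `` {x})"
    and ranked: "\<And>x y. P x \<Longrightarrow> (x, y) \<in> R \<Longrightarrow> P y \<and> (y = x \<or> \<mu> y < \<mu> x)"
    and "P x"
  shows "finite (R\<^sup>* `` {x})"
  using \<open>P x\<close>
proof (induction "\<mu> x" arbitrary: x rule: less_induct)
  case less
  let ?succ = "R `` {x} - {x}"
  have "R\<^sup>* `` {x} \<subseteq> insert x (\<Union>y\<in>?succ. R\<^sup>* `` {y})"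
  proof
    fix z assume "z \<in> R\<^sup>* `` {x}"
    hence "(x, z) \<in> R\<^sup>*" by simp
    thus "z \<in> insert x (\<Union>y\<in>?succ. R\<^sup>* `` {y})"
      by (induction rule: rtrancl_induct) (auto intro: rtrancl_into_rtrancl)
  qed
  moreover have "finite (R\<^sup>* `` {y})" if "y \<in> ?succ" for y
    using that ranked[OF less.prems] by (intro less.hyps) auto
  ultimately show ?case using branching by (meson finite.insertI finite_Diff finite_UN_I finite_subset)
qed

lemma finite_pbf_atoms: "finite (pbf_atoms \<phi>)"
  by (induction \<phi>) auto

definition successor :: "('ap state \<times> 'ap state) set" where
  "successor = {(q, q'). \<exists>\<sigma>. q' \<in> pbf_atoms (delta q \<sigma>)}"

lemma successor_ranked:
  assumes "well_discounted (fst q)" "(q, q') \<in> successor"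
  shows "well_discounted (fst q') \<and> (q' = q \<or> state_rank q' < state_rank q)"
  using assms well_discounted_atoms_delta state_rank_atoms_delta unfolding successor_def by blast

lemma finite_successor_Image: "finite (successor `` {q :: 'ap::finite state})"
proof -
  have "successor `` {q} = (\<Union>\<sigma>. pbf_atoms (delta q \<sigma>))" by (auto simp: successor_def)
  thus ?thesis by (simp add: finite_pbf_atoms)
qed


definition formula_states :: "'ap ltld \<Rightarrow> real \<Rightarrow> 'ap state set" where
  "formula_states \<phi> v = successor\<^sup>* `` {(\<phi>, Gt, v)}"

lemma formula_states_init: "(\<phi>, Gt, v) \<in> formula_states \<phi> v"
  by (simp add: formula_states_def)

lemma well_discounted_formula_states:
  assumes "well_discounted \<phi>" "q \<in> formula_states \<phi> v"
  shows "well_discounted (fst q)"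
proof -
  have "((\<phi>, Gt, v), q) \<in> successor\<^sup>*" using assms(2) by (simp add: formula_states_def)
  thus ?thesis
  proof (induction rule: rtrancl_induct)
    case (step q q')
    thus ?case using successor_ranked by blast
  qed (simp add: assms(1))
qed

lemma finite_formula_states:
  "well_discounted (\<phi> :: 'ap::finite ltld) \<Longrightarrow> finite (formula_states \<phi> v)"
  unfolding formula_states_def
  by (rule finite_rtrancl_Image_if_ranked[where P = "\<lambda>q. well_discounted (fst q)"])
    (auto simp: finite_successor_Image dest: successor_ranked)

lemma ranked_on_formula_states:
  "well_discounted \<phi> \<Longrightarrow> ranked_on (formula_states \<phi> v) delta state_rank"
  unfolding ranked_on_def
proof (intro ballI allI)
  fix q \<sigma> q' assume "well_discounted \<phi>" "q \<in> formula_states \<phi> v" "q' \<in> pbf_atoms (delta q \<sigma>)"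
  moreover from this have "(q, q') \<in> successor" by (auto simp: successor_def)
  ultimately show "q' \<in> formula_states \<phi> v \<and> (q' = q \<or> state_rank q' < state_rank q)"
    using successor_ranked[OF well_discounted_formula_states] unfolding formula_states_def
    by (blast intro: rtrancl_into_rtrancl)
qed

lemma lasso_finite_suffixes:
  assumes "lasso \<pi>"
  shows "finite (range (\<lambda>i. suffix_comp i \<pi>))"
proof -
  obtain u w where w: "w \<noteq> []"
    and \<pi>: "\<pi> = (\<lambda>i. if i < length u then u ! i else w ! ((i - length u) mod length w))"
    using assms unfolding lasso_def by blast
  let ?a = "length u" and ?b = "length w"
  have periodic: "\<pi> n = w ! ((n - ?a) mod ?b)" if "?a \<le> n" for n using that \<pi> by simp
  have "suffix_comp i \<pi> \<in> (\<lambda>j. suffix_comp j \<pi>) ` {..<?a + ?b}" for i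
  proof (cases "i < ?a")
    case False
    let ?j = "?a + (i - ?a) mod ?b"
    have "suffix_comp i \<pi> k = suffix_comp ?j \<pi> k" for k
    proof -
      have "suffix_comp i \<pi> k = w ! ((i - ?a + k) mod ?b)"
        using periodic[of "i + k"] False by (simp add: suffix_comp_def)
      also have "\<dots> = w ! (((i - ?a) mod ?b + k) mod ?b)" by (simp add: mod_add_left_eq)
      also have "\<dots> = suffix_comp ?j \<pi> k" using periodic[of "?j + k"] by (simp add: suffix_comp_def)
      finally show ?thesis .
    qed
    moreover have "?j < ?a + ?b" using w by simp
    ultimately show ?thesis by (auto simp: fun_eq_iff)
  qed auto
  thus ?thesis by (meson finite_lessThan finite_surj image_subsetI)
qed

lemma finite_suffixes_suffix_comp:
  "finite (range (\<lambda>i. suffix_comp i \<pi>)) \<Longrightarrow> finite (range (\<lambda>i. suffix_comp i (suffix_comp k \<pi>)))"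
  by (rule finite_subset[rotated]) auto

definition formula_aba :: "'ap::finite ltld \<Rightarrow> real \<Rightarrow> 'ap set aba" where
  "formula_aba \<phi> v = aba_of (formula_states \<phi> v) (\<phi>, Gt, v) delta {q. accepting q}"

context
  fixes \<phi> :: "'ap::finite ltld" and v :: real
  assumes wd: "well_discounted \<phi>"
begin

private lemmas aba = finite_formula_states[OF wd] ranked_on_formula_states[OF wd] formula_states_init

lemma wf_formula_aba: "wf_aba (formula_aba \<phi> v)"
  unfolding formula_aba_def by (rule wf_aba_of[OF aba])

lemma weak_formula_aba: "weak_aba (formula_aba \<phi> v)"
  unfolding formula_aba_def by (rule weak_aba_of[OF aba])

lemma accepts_formula_aba: "v < val \<pi> \<phi> \<Longrightarrow> accepts (formula_aba \<phi> v) \<pi>"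
  unfolding formula_aba_def using delta_sat_if_holds[OF well_discounted_formula_states[OF wd]]
  by (intro accepts_aba_of[OF aba, where Good = holds and rank = until_rank]) simp_all

lemma not_accepts_formula_aba:
  assumes "finite (range (\<lambda>i. suffix_comp i \<pi>))" "\<not> v < val \<pi> \<phi>"
  shows "\<not> accepts (formula_aba \<phi> v) \<pi>"
  unfolding formula_aba_def
proof (rule not_accepts_aba_of[OF aba, where rank = until_rank
      and Bad = "\<lambda>q \<pi>. finite (range (\<lambda>i. suffix_comp i \<pi>)) \<and> \<not> holds q \<pi>"])
  fix q \<pi>' S
  assume q: "q \<in> formula_states \<phi> v" and bad: "finite (range (\<lambda>i. suffix_comp i \<pi>')) \<and> \<not> holds q \<pi>'"
    and sat: "pbf_sat S (delta q (\<pi>' 0))"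
  obtain q' where "q' \<in> S \<inter> pbf_atoms (delta q (\<pi>' 0))" "\<not> holds q' (suffix_comp 1 \<pi>')"
    "q' = q \<and> accepting q \<longrightarrow> until_rank q (suffix_comp 1 \<pi>') < until_rank q \<pi>'"
    using delta_refuted_if_not_holds[OF well_discounted_formula_states[OF wd q]
        conjunct1[OF bad] conjunct2[OF bad] sat]
    by blast
  thus "\<exists>q'\<in>S \<inter> pbf_atoms (delta q (\<pi>' 0)).
      (finite (range (\<lambda>i. suffix_comp i (suffix_comp 1 \<pi>'))) \<and> \<not> holds q' (suffix_comp 1 \<pi>')) \<and>
      (q' = q \<and> q \<in> {q. accepting q} \<longrightarrow> until_rank q (suffix_comp 1 \<pi>') < until_rank q \<pi>')"
    using finite_suffixes_suffix_comp[of \<pi>' 1] bad by blast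
qed (use assms in simp)

end

theorem theorem1:
  fixes D :: "(nat \<Rightarrow> real) set"
    and \<phi> :: "'ap::finite ltld"
    and v :: real
  assumes "\<forall>\<eta>\<in>D. discounting \<eta>"
    and "ltld_over D \<phi>"
    and "0 \<le> v" and "v \<le> 1"
  shows "\<exists>A :: 'ap set aba. wf_aba A \<and> weak_aba A \<and>
           (\<forall>\<pi> :: 'ap comp.
              (val \<pi> \<phi> > v \<longrightarrow> accepts A \<pi>) \<and>
              (accepts A \<pi> \<and> lasso \<pi> \<longrightarrow> val \<pi> \<phi> > v))"
proof -
  \<comment> \<open>The construction works for every real threshold.\<close>
  have wd: "well_discounted \<phi>" using assms(1,2) by (auto simp: well_discounted_def ltld_over_def)
  show ?thesis
    using wf_formula_aba[OF wd] weak_formula_aba[OF wd] accepts_formula_aba[OF wd]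
      not_accepts_formula_aba[OF wd] lasso_finite_suffixes
    by blast
qed

end
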